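(* If $N$ is a totally real submanifold in an almost complex manifold $(M,J)$, then $TN$ is a totally real submanifold in $(TM,J^c)$.
   Context: An almost complex structure is a smooth field $J$ of endomorphisms of $TM$ with $J^2=-\mathrm{Id}$; a submanifold $N$ is totally real if $T_pN\cap J(p)T_pN=\{0\}$ for all $p$. $J^c$ denotes the complete lift of $J$ to the tangent bundle $TM$: in local coordinates $(x^h)$ on $M$ and induced fibre coordinates $(t^h)$ on $TM$, writing $J=(J_i^h)$, it is given by the block matrix $J^c=\begin{pmatrix}J_i^h&0\\ t^a\partial_aJ_i^h&J_i^h\end{pmatrix}$; it is an almost complex structure on $TM$. *)

theory Defs
  imports "HOL-Analysis.Analysis"
begin

fun iter_dd :: "'a::real_normed_vector list \<Rightarrow> ('a \<Rightarrow> 'b::real_normed_vector) \<Rightarrow> 'a \<Rightarrow> 'b" where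
  "iter_dd [] f = f"
| "iter_dd (v # vs) f = (\<lambda>x. vector_derivative (\<lambda>t. iter_dd vs f (x + t *\<^sub>R v)) (at 0))"

definition smooth_on :: "('a::euclidean_space \<Rightarrow> 'b::real_normed_vector) \<Rightarrow> 'a set \<Rightarrow> bool" where
  "smooth_on f S \<longleftrightarrow> open S \<and>
     (\<forall>vs. continuous_on S (iter_dd vs f) \<and>
       (\<forall>v. \<forall>x\<in>S. ((\<lambda>t. iter_dd vs f (x + t *\<^sub>R v)) has_vector_derivative
                       iter_dd (v # vs) f x) (at 0)))"

definition almost_complex_on :: "('m::euclidean_space \<Rightarrow> ('m \<Rightarrow>\<^sub>L 'm)) \<Rightarrow> 'm set \<Rightarrow> bool" where
  "almost_complex_on J U \<longleftrightarrow> smooth_on J U \<and>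
     (\<forall>x\<in>U. \<forall>v. blinfun_apply (J x) (blinfun_apply (J x) v) = - v)"

definition totally_real_subspace :: "('a::real_vector \<Rightarrow> 'a) \<Rightarrow> 'a set \<Rightarrow> bool" where
  "totally_real_subspace Jp V \<longleftrightarrow> V \<inter> Jp ` V = {0}"

definition tangent_space :: "('a::real_normed_vector \<Rightarrow> 'b::real_normed_vector) \<Rightarrow> 'a \<Rightarrow> 'b set" where
  "tangent_space f z = range (frechet_derivative f (at z))"

(* embedded submanifold N = phi ` W of the coordinate domain U, given by a smooth
   injective immersion that is a homeomorphism onto its image *)
definition embedded_param :: "('k::euclidean_space \<Rightarrow> 'm::euclidean_space) \<Rightarrow> 'k set \<Rightarrow> 'm set \<Rightarrow> bool" where
  "embedded_param \<phi> W U \<longleftrightarrow> smooth_on \<phi> W \<and> \<phi> ` W \<subseteq> U \<and> inj_on \<phi> W \<and>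
     continuous_on (\<phi> ` W) (inv_into W \<phi>) \<and>
     (\<forall>x\<in>W. inj (frechet_derivative \<phi> (at x)))"

(* complete lift J^c in induced coordinates (x,t) on TU = U x 'm:
   J^c(x,t)(X,Y) = (J(x) X, (t^a d_a J)(x) X + J(x) Y) *)
definition complete_lift :: "('m::euclidean_space \<Rightarrow> ('m \<Rightarrow>\<^sub>L 'm)) \<Rightarrow> 'm \<times> 'm \<Rightarrow> 'm \<times> 'm \<Rightarrow> 'm \<times> 'm" where
  "complete_lift J = (\<lambda>(x, t) (X, Y).
     (blinfun_apply (J x) X,
      blinfun_apply (vector_derivative (\<lambda>s. J (x + s *\<^sub>R t)) (at 0)) X + blinfun_apply (J x) Y))"

(* induced parametrisation of TN: (x,w) |-> (phi x, d phi_x w) *)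
definition tangent_lift_param :: "('k::euclidean_space \<Rightarrow> 'm::euclidean_space) \<Rightarrow> 'k \<times> 'k \<Rightarrow> 'm \<times> 'm" where
  "tangent_lift_param \<phi> = (\<lambda>(x, w). (\<phi> x, frechet_derivative \<phi> (at x) w))"

end

theory Submission
  imports Defs
begin

(* In induced coordinates TN is parametrised by T(x, w) = (phi x, d phi_x w). Relative to the
   splitting into horizontal and vertical parts, the differential of T and the complete lift J^c
   are both block lower triangular, with diagonal blocks d phi_x and J. So if dT(v) = J^c(dT(v')),
   the horizontal parts satisfy d phi_x(v1) = J(d phi_x(v1')) and vanish because N is totally
   real; then the vertical parts satisfy the same relation and vanish as well. That T is again an
   embedding is inherited from phi; the fibre coordinate w depends continuously on d phi_x w
   because injective linear maps stay uniformly injective under small perturbations. *)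

lemma eventually_line_in_open:
  fixes x v :: "'a::real_normed_vector"
  assumes "open S" "x \<in> S"
  shows "\<forall>\<^sub>F t in nhds 0. x + t *\<^sub>R v \<in> S"
proof -
  have "open ((\<lambda>t::real. x + t *\<^sub>R v) -` S)"
    using assms(1) by (intro open_vimage continuous_intros)
  then show ?thesis
    using eventually_nhds_in_open[of _ 0] assms(2) by fastforce
qed

lemma line_has_vector_derivative_cong:
  fixes x v :: "'a::real_normed_vector"
  assumes "open S" "x \<in> S" "\<And>y. y \<in> S \<Longrightarrow> f y = g y"
  shows "((\<lambda>t. f (x + t *\<^sub>R v)) has_vector_derivative D) (at 0) \<longleftrightarrow>
         ((\<lambda>t. g (x + t *\<^sub>R v)) has_vector_derivative D) (at 0)"
  using eventually_line_in_open[OF assms(1,2), of v] assms(2,3)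
  by (intro has_vector_derivative_cong_ev) (auto elim: eventually_mono)

lemma iter_dd_single_cong:
  fixes x :: "'a::real_normed_vector"
  assumes "open S" "x \<in> S" "\<And>y. y \<in> S \<Longrightarrow> f y = g y"
  shows "iter_dd [v] f x = iter_dd [v] g x"
  using line_has_vector_derivative_cong[of S x f g v] assms by (simp add: vector_derivative_def)

lemma iter_dd_append: "iter_dd (vs @ [v]) f = iter_dd vs (iter_dd [v] f)"
  by (induction vs) auto

(* smooth_on truncated at derivatives of order n, set up recursively so that closure properties
   can be proved by induction on the order. *)
fun smooth_upto :: "nat \<Rightarrow> ('a::euclidean_space \<Rightarrow> 'b::real_normed_vector) \<Rightarrow> 'a set \<Rightarrow> bool" where
  "smooth_upto 0 f S \<longleftrightarrow> open S \<and> continuous_on S f \<and>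
     (\<forall>v. \<forall>x\<in>S. ((\<lambda>t. f (x + t *\<^sub>R v)) has_vector_derivative iter_dd [v] f x) (at 0))"
| "smooth_upto (Suc n) f S \<longleftrightarrow> smooth_upto 0 f S \<and> (\<forall>v. smooth_upto n (iter_dd [v] f) S)"

lemma smooth_upto_iff_iter_dd:
  "smooth_upto n f S \<longleftrightarrow> open S \<and>
     (\<forall>vs. length vs \<le> n \<longrightarrow> continuous_on S (iter_dd vs f) \<and>
       (\<forall>v. \<forall>x\<in>S. ((\<lambda>t. iter_dd vs f (x + t *\<^sub>R v)) has_vector_derivative
                       iter_dd (v # vs) f x) (at 0)))"
proof (induction n arbitrary: f)
  case 0
  then show ?case by simp
next
  case (Suc n)
  have split_length: "(\<forall>vs. length vs \<le> Suc n \<longrightarrow> Q vs) \<longleftrightarrow>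
      Q [] \<and> (\<forall>v ws. length ws \<le> n \<longrightarrow> Q (ws @ [v]))" for Q :: "'a list \<Rightarrow> bool"
  proof (intro iffI conjI allI impI)
    fix vs :: "'a list"
    assume "Q [] \<and> (\<forall>v ws. length ws \<le> n \<longrightarrow> Q (ws @ [v]))" "length vs \<le> Suc n"
    then show "Q vs" by (cases vs rule: rev_cases) auto
  qed auto
  show ?case
    unfolding smooth_upto.simps(2) Suc.IH split_length
    by (auto simp: iter_dd_append)
qed

declare iter_dd.simps(2)[simp del]

lemma smooth_on_iff_smooth_upto: "smooth_on f S \<longleftrightarrow> (\<forall>n. smooth_upto n f S)"
  unfolding smooth_on_def smooth_upto_iff_iter_dd by blast

lemma smooth_upto_imp_0: "smooth_upto n f S \<Longrightarrow> smooth_upto 0 f S"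
  by (cases n) auto

lemma smooth_upto_Suc_imp: "smooth_upto (Suc n) f S \<Longrightarrow> smooth_upto n f S"
  unfolding smooth_upto_iff_iter_dd by auto

lemma smooth_upto_open: "smooth_upto n f S \<Longrightarrow> open S"
  using smooth_upto_imp_0 by fastforce

lemma smooth_upto_continuous_on: "smooth_upto n f S \<Longrightarrow> continuous_on S f"
  using smooth_upto_imp_0 by fastforce

lemma smooth_upto_has_vector_derivative:
  "smooth_upto n f S \<Longrightarrow> x \<in> S \<Longrightarrow>
     ((\<lambda>t. f (x + t *\<^sub>R v)) has_vector_derivative iter_dd [v] f x) (at 0)"
  using smooth_upto_imp_0 by fastforce

lemma smooth_upto_cong:
  assumes "smooth_upto n f S" "\<And>x. x \<in> S \<Longrightarrow> f x = g x"
  shows "smooth_upto n g S"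
  using assms
proof (induction n arbitrary: f g)
  case 0
  then have "open S"
    by simp
  have "((\<lambda>t. g (x + t *\<^sub>R v)) has_vector_derivative iter_dd [v] g x) (at 0)" if "x \<in> S" for x v
  proof -
    have "((\<lambda>t. f (x + t *\<^sub>R v)) has_vector_derivative iter_dd [v] f x) (at 0)"
      using 0(1) that unfolding smooth_upto.simps by blast
    then show ?thesis
      using line_has_vector_derivative_cong[OF \<open>open S\<close> that, of f g]
        iter_dd_single_cong[OF \<open>open S\<close> that, of f g] 0(2) by simp
  qed
  moreover have "continuous_on S g"
    using 0 continuous_on_eq by fastforce
  ultimately show ?case
    using \<open>open S\<close> by simp
next
  case (Suc n)
  have "open S"
    using Suc.prems(1) smooth_upto_open by blast
  have "smooth_upto n (iter_dd [v] g) S" for v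
  proof (rule Suc.IH[of "iter_dd [v] f"])
    show "smooth_upto n (iter_dd [v] f) S"
      using Suc.prems(1) by (simp only: smooth_upto.simps)
    show "iter_dd [v] f x = iter_dd [v] g x" if "x \<in> S" for x
      using iter_dd_single_cong[OF \<open>open S\<close> that] Suc.prems(2) by blast
  qed
  moreover have "smooth_upto n g S"
    using Suc smooth_upto_Suc_imp by blast
  ultimately show ?case
    using smooth_upto_imp_0 by (simp only: smooth_upto.simps) blast
qed

declare smooth_upto.simps[simp del]

lemma smooth_upto_SucD: "smooth_upto (Suc n) f S \<Longrightarrow> smooth_upto n (iter_dd [v] f) S"
  by (simp only: smooth_upto.simps)

lemma iter_dd_single_eq:
  "((\<lambda>t. f (x + t *\<^sub>R v)) has_vector_derivative D) (at 0) \<Longrightarrow> iter_dd [v] f x = D"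
  by (simp add: iter_dd.simps(2) vector_derivative_at)

lemma smooth_uptoI:
  assumes "open S" "continuous_on S f"
    and "\<And>v x. x \<in> S \<Longrightarrow> ((\<lambda>t. f (x + t *\<^sub>R v)) has_vector_derivative D v x) (at 0)"
    and "\<And>v m. n = Suc m \<Longrightarrow> smooth_upto m (D v) S"
  shows "smooth_upto n f S"
proof -
  have D: "iter_dd [v] f x = D v x" if "x \<in> S" for v x
    using assms(3)[OF that] by (rule iter_dd_single_eq)
  have f0: "smooth_upto 0 f S"
    using assms(1-3) D by (simp only: smooth_upto.simps) auto
  show ?thesis
  proof (cases n)
    case (Suc m)
    have "smooth_upto m (iter_dd [v] f) S" for v
      using assms(4)[OF Suc] by (rule smooth_upto_cong) (simp add: D)
    with f0 show ?thesis
      unfolding Suc smooth_upto.simps(2) by blast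
  qed (use f0 in simp)
qed

lemma smooth_upto_add:
  "smooth_upto n f S \<Longrightarrow> smooth_upto n g S \<Longrightarrow> smooth_upto n (\<lambda>x. f x + g x) S"
proof (induction n arbitrary: f g rule: less_induct)
  case (less n)
  show ?case
  proof (rule smooth_uptoI[where D="\<lambda>v x. iter_dd [v] f x + iter_dd [v] g x"])
    show "open S"
      using less.prems smooth_upto_open by blast
    show "continuous_on S (\<lambda>x. f x + g x)"
      using less.prems by (intro continuous_on_add smooth_upto_continuous_on)
    show "((\<lambda>t. f (x + t *\<^sub>R v) + g (x + t *\<^sub>R v)) has_vector_derivative
        iter_dd [v] f x + iter_dd [v] g x) (at 0)" if "x \<in> S" for v x
      using less.prems that by (intro has_vector_derivative_add smooth_upto_has_vector_derivative)
    show "smooth_upto m (\<lambda>x. iter_dd [v] f x + iter_dd [v] g x) S" if "n = Suc m" for v m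
      using that less.prems by (intro less.IH; simp add: smooth_upto_SucD)
  qed
qed

lemma smooth_upto_const: "open S \<Longrightarrow> smooth_upto n (\<lambda>x. c) S"
proof (induction n arbitrary: c rule: less_induct)
  case (less n)
  show ?case
    by (rule smooth_uptoI[where D="\<lambda>v x. 0"]) (use less in auto)
qed

lemma smooth_upto_linear: "open S \<Longrightarrow> bounded_linear l \<Longrightarrow> smooth_upto n l S"
proof (rule smooth_uptoI[where D="\<lambda>v x. l v"])
  assume "bounded_linear l"
  then show "continuous_on S l"
    by (simp add: linear_continuous_on)
  show "((\<lambda>t. l (x + t *\<^sub>R v)) has_vector_derivative l v) (at 0)" for v x
    using \<open>bounded_linear l\<close> by (auto intro!: derivative_eq_intros simp: has_vector_derivative_def
        linear_add linear_scale bounded_linear.linear)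
qed (simp_all add: smooth_upto_const)

lemma smooth_upto_sum:
  "finite A \<Longrightarrow> open S \<Longrightarrow> (\<And>i. i \<in> A \<Longrightarrow> smooth_upto n (f i) S) \<Longrightarrow>
     smooth_upto n (\<lambda>x. \<Sum>i\<in>A. f i x) S"
  by (induction A rule: finite_induct) (simp_all add: smooth_upto_const smooth_upto_add)

lemma smooth_upto_Pair:
  "smooth_upto n f S \<Longrightarrow> smooth_upto n g S \<Longrightarrow> smooth_upto n (\<lambda>x. (f x, g x)) S"
proof (induction n arbitrary: f g rule: less_induct)
  case (less n)
  show ?case
  proof (rule smooth_uptoI[where D="\<lambda>v x. (iter_dd [v] f x, iter_dd [v] g x)"])
    show "open S"
      using less.prems smooth_upto_open by blast
    show "continuous_on S (\<lambda>x. (f x, g x))"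
      using less.prems by (intro continuous_on_Pair smooth_upto_continuous_on)
    show "((\<lambda>t. (f (x + t *\<^sub>R v), g (x + t *\<^sub>R v))) has_vector_derivative
        (iter_dd [v] f x, iter_dd [v] g x)) (at 0)" if "x \<in> S" for v x
      using less.prems that by (intro has_vector_derivative_Pair smooth_upto_has_vector_derivative)
    show "smooth_upto m (\<lambda>x. (iter_dd [v] f x, iter_dd [v] g x)) S" if "n = Suc m" for v m
      using that less.prems by (intro less.IH; simp add: smooth_upto_SucD)
  qed
qed

lemma (in bounded_bilinear) smooth_upto:
  "smooth_upto n f S \<Longrightarrow> smooth_upto n g S \<Longrightarrow> smooth_upto n (\<lambda>x. prod (f x) (g x)) S"
proof (induction n arbitrary: f g rule: less_induct)
  case (less n)
  show ?case
  proof (rule smooth_uptoI[where D="\<lambda>v x. prod (f x) (iter_dd [v] g x) + prod (iter_dd [v] f x) (g x)"])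
    show "open S"
      using less.prems smooth_upto_open by blast
    show "continuous_on S (\<lambda>x. prod (f x) (g x))"
      using less.prems by (intro continuous_on smooth_upto_continuous_on)
    show "((\<lambda>t. prod (f (x + t *\<^sub>R v)) (g (x + t *\<^sub>R v))) has_vector_derivative
        prod (f x) (iter_dd [v] g x) + prod (iter_dd [v] f x) (g x)) (at 0)" if "x \<in> S" for v x
      using has_vector_derivative[OF smooth_upto_has_vector_derivative smooth_upto_has_vector_derivative,
          OF less.prems(1) that less.prems(2) that] by simp
    show "smooth_upto m (\<lambda>x. prod (f x) (iter_dd [v] g x) + prod (iter_dd [v] f x) (g x)) S"
      if "n = Suc m" for v m
    proof -
      have m: "m < n"
        using that by simp
      have f: "smooth_upto (Suc m) f S" and g: "smooth_upto (Suc m) g S"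
        using less.prems unfolding that .
      show ?thesis
        using less.IH[OF m smooth_upto_Suc_imp[OF f] smooth_upto_SucD[OF g]]
          less.IH[OF m smooth_upto_SucD[OF f] smooth_upto_Suc_imp[OF g]]
        by (rule smooth_upto_add)
    qed
  qed
qed

lemma smooth_upto_compose_linear:
  assumes "smooth_upto n f S" "bounded_linear l"
  shows "smooth_upto n (\<lambda>x. f (l x)) (l -` S)"
  using assms(1)
proof (induction n arbitrary: f rule: less_induct)
  case (less n)
  show ?case
  proof (rule smooth_uptoI[where D="\<lambda>v x. iter_dd [l v] f (l x)"])
    have l: "continuous_on UNIV l"
      by (rule linear_continuous_on[OF assms(2)])
    show "open (l -` S)"
      by (rule open_vimage[OF smooth_upto_open[OF less.prems] l])
    show "continuous_on (l -` S) (\<lambda>x. f (l x))"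
      using continuous_on_subset[OF l subset_UNIV]
      by (rule continuous_on_compose2[OF smooth_upto_continuous_on[OF less.prems]]) auto
    show "((\<lambda>t. f (l (x + t *\<^sub>R v))) has_vector_derivative iter_dd [l v] f (l x)) (at 0)"
      if "x \<in> l -` S" for v x
      using smooth_upto_has_vector_derivative[OF less.prems, of "l x" "l v"] that
        linear_add[OF bounded_linear.linear[OF assms(2)]] linear_scale[OF bounded_linear.linear[OF assms(2)]]
      by simp
    show "smooth_upto m (\<lambda>x. iter_dd [l v] f (l x)) (l -` S)" if "n = Suc m" for v m
      using that less.prems by (intro less.IH; simp add: smooth_upto_SucD)
  qed
qed

lemma has_vector_derivative_line_at:
  fixes y v :: "'a::real_vector"
  assumes "((\<lambda>t. f (y + s *\<^sub>R v + t *\<^sub>R v)) has_vector_derivative D) (at 0)"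
  shows "((\<lambda>t. f (y + t *\<^sub>R v)) has_vector_derivative D) (at s)"
proof -
  have "((\<lambda>t. t - s) has_vector_derivative 1) (at s)"
    by (auto intro!: derivative_eq_intros)
  from vector_diff_chain_at[OF this] assms
  have "((\<lambda>t. f (y + s *\<^sub>R v + (t - s) *\<^sub>R v)) has_vector_derivative D) (at s)"
    by (simp add: o_def)
  moreover have "y + s *\<^sub>R v + (t - s) *\<^sub>R v = y + t *\<^sub>R v" for t
    by (simp add: scaleR_diff_left)
  ultimately show ?thesis
    by simp
qed

lemma has_vector_derivative_increment_bound:
  fixes g :: "real \<Rightarrow> 'b::real_normed_vector"
  assumes "\<And>t. t \<in> closed_segment 0 s \<Longrightarrow> (g has_vector_derivative g' t) (at t within closed_segment 0 s)"
    and "\<And>t. t \<in> closed_segment 0 s \<Longrightarrow> norm (g' t - c) \<le> e"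
  shows "norm (g s - g 0 - s *\<^sub>R c) \<le> e * \<bar>s\<bar>"
proof -
  have "norm ((g s - s *\<^sub>R c) - (g 0 - 0 *\<^sub>R c)) \<le> e * norm (s - 0)"
  proof (rule differentiable_bound[OF convex_closed_segment])
    fix t
    assume t: "t \<in> closed_segment 0 s"
    have "((\<lambda>t. t *\<^sub>R c) has_vector_derivative c) (at t within closed_segment 0 s)"
      using bounded_linear.has_derivative[OF bounded_linear_scaleR_left has_derivative_ident]
      by (simp add: has_vector_derivative_def)
    with assms(1)[OF t]
    show "((\<lambda>t. g t - t *\<^sub>R c) has_derivative (\<lambda>u. u *\<^sub>R (g' t - c))) (at t within closed_segment 0 s)"
      unfolding has_vector_derivative_def[symmetric] by (rule has_vector_derivative_diff)
    show "onorm (\<lambda>u. u *\<^sub>R (g' t - c)) \<le> e"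
      using onorm_scaleR_left[OF bounded_linear_ident, of "g' t - c"] assms(2)[OF t]
      by (simp add: onorm_id)
  qed auto
  then show ?thesis
    by (simp add: algebra_simps)
qed

lemma segment_on_line_in_ball:
  assumes q: "norm (q - x) < r / (1 + norm v)" and s: "\<bar>s\<bar> < r / (1 + norm v)"
    and t: "t \<in> closed_segment 0 s"
  shows "q + t *\<^sub>R v \<in> ball x r"
proof -
  have "\<bar>t\<bar> \<le> \<bar>s\<bar>"
    using t by (auto simp: closed_segment_real_eq abs_mult mult_left_le)
  then have "norm (q + t *\<^sub>R v - x) \<le> norm (q - x) + \<bar>s\<bar> * norm v"
    using norm_triangle_ineq[of "q - x" "t *\<^sub>R v"] mult_right_mono[of "\<bar>t\<bar>" "\<bar>s\<bar>" "norm v"]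
    by (simp add: algebra_simps)
  also have "\<dots> < r / (1 + norm v) + r / (1 + norm v) * norm v"
    using q s by (intro add_less_le_mono mult_right_mono) auto
  also have "\<dots> = r / (1 + norm v) * (1 + norm v)"
    by (simp only: distrib_left mult_1_right)
  also have "\<dots> = r"
    using add_pos_nonneg[OF zero_less_one norm_ge_zero[of v]] by simp
  finally show ?thesis
    by (simp add: dist_norm norm_minus_commute)
qed

lemma smooth_upto_line_linearization:
  fixes f :: "'a::euclidean_space \<Rightarrow> 'b::real_normed_vector"
  assumes f: "smooth_upto (Suc 0) f S" and x: "x \<in> S" and e: "e > 0"
  obtains d where "d > 0"
    "\<And>q s. norm (q - x) < d \<Longrightarrow> \<bar>s\<bar> < d \<Longrightarrow>
       norm (f (q + s *\<^sub>R v) - f q - s *\<^sub>R iter_dd [v] f x) \<le> e * \<bar>s\<bar>"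
proof -
  let ?D = "iter_dd [v] f"
  obtain r where r: "r > 0" "ball x r \<subseteq> S" "\<And>y. y \<in> ball x r \<Longrightarrow> norm (?D y - ?D x) < e"
  proof -
    obtain r1 where "r1 > 0" "ball x r1 \<subseteq> S"
      using openE[OF smooth_upto_open[OF f] x] .
    moreover obtain r2 where "r2 > 0" "\<And>y. y \<in> S \<Longrightarrow> dist y x < r2 \<Longrightarrow> dist (?D y) (?D x) < e"
      using smooth_upto_continuous_on[OF smooth_upto_SucD[OF f]] x e
      unfolding continuous_on_iff by blast
    moreover have "y \<in> S" "dist y x < r2" if "y \<in> ball x (min r1 r2)" for y
      using that \<open>ball x r1 \<subseteq> S\<close> by (auto simp: dist_commute)
    ultimately show ?thesis
      by (intro that[of "min r1 r2"]) (auto simp: dist_norm)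
  qed
  define d where "d = r / (1 + norm v)"
  have "d > 0"
    using r(1) by (simp add: d_def add_pos_nonneg)
  moreover have "norm (f (q + s *\<^sub>R v) - f q - s *\<^sub>R ?D x) \<le> e * \<bar>s\<bar>"
    if q: "norm (q - x) < d" and s: "\<bar>s\<bar> < d" for q s
  proof -
    have near: "q + t *\<^sub>R v \<in> ball x r" if "t \<in> closed_segment 0 s" for t
      using q s that unfolding d_def by (rule segment_on_line_in_ball)
    have "((\<lambda>t. f (q + t *\<^sub>R v)) has_vector_derivative ?D (q + t *\<^sub>R v)) (at t within closed_segment 0 s)"
      if "t \<in> closed_segment 0 s" for t
      using near[OF that] r(2)
      by (intro has_vector_derivative_at_within[OF has_vector_derivative_line_at,
            OF smooth_upto_has_vector_derivative[OF f]]) blast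
    moreover have "norm (?D (q + t *\<^sub>R v) - ?D x) \<le> e" if "t \<in> closed_segment 0 s" for t
      using r(3)[OF near[OF that]] by simp
    ultimately have "norm (f (q + s *\<^sub>R v) - f (q + 0 *\<^sub>R v) - s *\<^sub>R ?D x) \<le> e * \<bar>s\<bar>"
      by (rule has_vector_derivative_increment_bound)
    then show ?thesis
      by simp
  qed
  ultimately show ?thesis
    using that by blast
qed

lemma linearization_insert_coordinate:
  fixes f :: "'a::euclidean_space \<Rightarrow> 'b::real_normed_vector"
  assumes j: "j \<in> Basis" "j \<notin> B" "B \<subseteq> Basis" and h: "\<forall>i\<in>Basis - insert j B. h \<bullet> i = 0"
    and along_B: "\<And>h'. \<forall>i\<in>Basis - B. h' \<bullet> i = 0 \<Longrightarrow> norm h' \<le> 2 * norm h \<Longrightarrow>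
        norm (f (x + h') - f x - (\<Sum>i\<in>B. (h' \<bullet> i) *\<^sub>R D i)) \<le> e * norm h'"
    and along_j: "\<And>q s. norm (q - x) \<le> 2 * norm h \<Longrightarrow> \<bar>s\<bar> \<le> norm h \<Longrightarrow>
        norm (f (q + s *\<^sub>R j) - f q - s *\<^sub>R D j) \<le> e * \<bar>s\<bar>"
    and e: "e \<ge> 0"
  shows "norm (f (x + h) - f x - (\<Sum>i\<in>insert j B. (h \<bullet> i) *\<^sub>R D i)) \<le> 3 * e * norm h"
proof -
  define s where "s = h \<bullet> j"
  define h' where "h' = h - s *\<^sub>R j"
  have s: "\<bar>s\<bar> \<le> norm h"
    unfolding s_def by (rule Basis_le_norm[OF j(1)])
  have h': "norm h' \<le> 2 * norm h"
    using norm_triangle_ineq4[of h "s *\<^sub>R j"] s j by (simp add: h'_def)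
  have h'_coords: "\<forall>i\<in>Basis - B. h' \<bullet> i = 0"
    using h j by (auto simp: h'_def s_def inner_diff_left inner_Basis)
  have "(\<Sum>i\<in>B. (h' \<bullet> i) *\<^sub>R D i) = (\<Sum>i\<in>B. (h \<bullet> i) *\<^sub>R D i)"
    using j by (intro sum.cong) (auto simp: h'_def inner_diff_left inner_Basis)
  then have step_B: "norm (f (x + h') - f x - (\<Sum>i\<in>B. (h \<bullet> i) *\<^sub>R D i)) \<le> e * norm h'"
    using along_B[OF h'_coords h'] by simp
  have step_j: "norm (f (x + h' + s *\<^sub>R j) - f (x + h') - s *\<^sub>R D j) \<le> e * \<bar>s\<bar>"
    using along_j[of "x + h'" s] h' s by simp
  have split: "f (x + h) - f x - (\<Sum>i\<in>insert j B. (h \<bullet> i) *\<^sub>R D i) =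
      (f (x + h' + s *\<^sub>R j) - f (x + h') - s *\<^sub>R D j) +
      (f (x + h') - f x - (\<Sum>i\<in>B. (h \<bullet> i) *\<^sub>R D i))"
    using j(2) finite_subset[OF j(3) finite_Basis] by (simp add: h'_def s_def algebra_simps)
  have "norm (f (x + h) - f x - (\<Sum>i\<in>insert j B. (h \<bullet> i) *\<^sub>R D i)) \<le> e * \<bar>s\<bar> + e * norm h'"
    unfolding split by (rule norm_triangle_le[OF add_mono[OF step_j step_B]])
  also have "\<dots> \<le> e * norm h + e * (2 * norm h)"
    using s h' e by (intro add_mono mult_left_mono) auto
  finally show ?thesis
    by (simp add: algebra_simps)
qed

lemma smooth_upto_linearization_on_coordinates:
  fixes f :: "'a::euclidean_space \<Rightarrow> 'b::real_normed_vector"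
  assumes f: "smooth_upto (Suc 0) f S" and x: "x \<in> S" and B: "B \<subseteq> Basis" and e: "e > 0"
  shows "\<exists>d>0. \<forall>h. (\<forall>i\<in>Basis - B. h \<bullet> i = 0) \<longrightarrow> norm h < d \<longrightarrow>
           norm (f (x + h) - f x - (\<Sum>i\<in>B. (h \<bullet> i) *\<^sub>R iter_dd [i] f x)) \<le> e * norm h"
proof -
  have "finite B"
    using B finite_Basis finite_subset by blast
  then show ?thesis
    using B e
  proof (induction B arbitrary: e)
    case empty
    have "h = 0" if "\<forall>i\<in>Basis - {}. h \<bullet> i = 0" for h :: 'a
      using that euclidean_all_zero_iff by auto
    then show ?case
      by (intro exI[of _ 1]) force
  next
    case (insert j B)
    let ?D = "\<lambda>i. iter_dd [i] f x"
    obtain d1 where d1: "d1 > 0" "\<And>h. \<forall>i\<in>Basis - B. h \<bullet> i = 0 \<Longrightarrow> norm h < d1 \<Longrightarrow>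
        norm (f (x + h) - f x - (\<Sum>i\<in>B. (h \<bullet> i) *\<^sub>R ?D i)) \<le> e / 3 * norm h"
      using insert.IH[of "e / 3"] insert.prems by auto
    obtain d2 where d2: "d2 > 0" "\<And>q s. norm (q - x) < d2 \<Longrightarrow> \<bar>s\<bar> < d2 \<Longrightarrow>
        norm (f (q + s *\<^sub>R j) - f q - s *\<^sub>R ?D j) \<le> e / 3 * \<bar>s\<bar>"
      using smooth_upto_line_linearization[OF f x, of "e / 3" j] insert.prems(2) by auto
    have "norm (f (x + h) - f x - (\<Sum>i\<in>insert j B. (h \<bullet> i) *\<^sub>R ?D i)) \<le> 3 * (e / 3) * norm h"
      if h: "\<forall>i\<in>Basis - insert j B. h \<bullet> i = 0" "norm h < min d1 d2 / 2" for h
    proof (rule linearization_insert_coordinate[OF _ insert.hyps(2) _ h(1)])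
      show "norm (f (x + h') - f x - (\<Sum>i\<in>B. (h' \<bullet> i) *\<^sub>R ?D i)) \<le> e / 3 * norm h'"
        if "\<forall>i\<in>Basis - B. h' \<bullet> i = 0" "norm h' \<le> 2 * norm h" for h'
        using d1(2) that h(2) by simp
      show "norm (f (q + s *\<^sub>R j) - f q - s *\<^sub>R ?D j) \<le> e / 3 * \<bar>s\<bar>"
        if "norm (q - x) \<le> 2 * norm h" "\<bar>s\<bar> \<le> norm h" for q s
      proof -
        have "2 * norm h < d2"
          using h(2) by simp
        then have "norm (q - x) < d2" "\<bar>s\<bar> < d2"
          using that norm_ge_zero[of h] by linarith+
        then show ?thesis
          by (rule d2(2))
      qed
    qed (use insert.prems in auto)
    then show ?case
      using d1(1) d2(1) by (intro exI[of _ "min d1 d2 / 2"]) auto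
  qed
qed

lemma has_derivative_along_line:
  assumes "(f has_derivative f') (at x)"
  shows "((\<lambda>t. f (x + t *\<^sub>R v)) has_vector_derivative f' v) (at 0)"
proof -
  have "((\<lambda>t. x + t *\<^sub>R v) has_derivative (\<lambda>t. t *\<^sub>R v)) (at 0)"
    by (auto intro!: derivative_eq_intros)
  moreover have "(f has_derivative f') (at (x + 0 *\<^sub>R v))"
    using assms by simp
  ultimately have "((\<lambda>t. f (x + t *\<^sub>R v)) has_derivative (\<lambda>t. f' (t *\<^sub>R v))) (at 0)"
    by (rule has_derivative_compose)
  then show ?thesis
    unfolding has_vector_derivative_def using linear.scaleR[OF has_derivative_linear[OF assms]]
    by simp
qed

lemma smooth_upto_has_derivative:
  fixes f :: "'a::euclidean_space \<Rightarrow> 'b::real_normed_vector"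
  assumes f: "smooth_upto (Suc 0) f S" and x: "x \<in> S"
  shows "(f has_derivative (\<lambda>v. iter_dd [v] f x)) (at x)"
proof -
  let ?L = "\<lambda>h. \<Sum>i\<in>Basis. (h \<bullet> i) *\<^sub>R iter_dd [i] f x"
  have L: "(f has_derivative ?L) (at x)"
    unfolding has_derivative_at_alt
  proof (intro conjI allI impI)
    show "bounded_linear ?L"
      by (intro bounded_linear_sum bounded_linear_compose[OF bounded_linear_scaleR_left]
          bounded_linear_inner_left)
    fix e :: real
    assume "e > 0"
    then obtain d where "d > 0" and d: "\<And>h. norm h < d \<Longrightarrow> norm (f (x + h) - f x - ?L h) \<le> e * norm h"
      using smooth_upto_linearization_on_coordinates[OF f x order_refl] by auto
    show "\<exists>d>0. \<forall>y. norm (y - x) < d \<longrightarrow> norm (f y - f x - ?L (y - x)) \<le> e * norm (y - x)"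
      using \<open>d > 0\<close> d[of "y - x" for y] by (intro exI[of _ d]) auto
  qed
  have "?L v = iter_dd [v] f x" for v
    using has_derivative_along_line[OF L] smooth_upto_has_vector_derivative[OF f x]
    by (rule vector_derivative_unique_at)
  with L show ?thesis
    by simp
qed

lemma smooth_on_has_derivative:
  "smooth_on f S \<Longrightarrow> x \<in> S \<Longrightarrow> (f has_derivative (\<lambda>v. iter_dd [v] f x)) (at x)"
  using smooth_on_iff_smooth_upto smooth_upto_has_derivative by blast

lemma smooth_on_frechet_derivative:
  "smooth_on f S \<Longrightarrow> x \<in> S \<Longrightarrow> frechet_derivative f (at x) = (\<lambda>v. iter_dd [v] f x)"
  by (rule frechet_derivative_at[symmetric, OF smooth_on_has_derivative])

lemma smooth_on_has_frechet_derivative: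
  "smooth_on f S \<Longrightarrow> x \<in> S \<Longrightarrow> (f has_derivative frechet_derivative f (at x)) (at x)"
  using smooth_on_frechet_derivative[of f S x] smooth_on_has_derivative[of f S x] by simp

lemma linear_eq_sum_Basis:
  fixes v :: "'a::euclidean_space"
  assumes "linear L"
  shows "L v = (\<Sum>i\<in>Basis. (v \<bullet> i) *\<^sub>R L i)"
proof -
  have "L v = L (\<Sum>i\<in>Basis. (v \<bullet> i) *\<^sub>R i)"
    by (simp add: euclidean_representation)
  also have "\<dots> = (\<Sum>i\<in>Basis. (v \<bullet> i) *\<^sub>R L i)"
    using assms by (simp add: linear_sum linear_scale)
  finally show ?thesis .
qed

(* A lower bound c for A0 survives perturbations of A0 of norm less than c / 2. *)
lemma tendsto_blinfun_apply_cancel: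
  fixes A :: "'a \<Rightarrow> 'k::real_normed_vector \<Rightarrow>\<^sub>L 'm::euclidean_space"
  assumes A: "(A \<longlongrightarrow> A0) F" and inj: "inj (blinfun_apply A0)"
    and Aw: "((\<lambda>p. A p (w p)) \<longlongrightarrow> A0 w0) F"
  shows "(w \<longlongrightarrow> w0) F"
proof -
  obtain c where c: "c > 0" "\<And>u. c * norm u \<le> norm (A0 u)"
    using linear_inj_bounded_below_pos[OF bounded_linear.linear[OF blinfun.bounded_linear_right] inj] by blast
  have dA: "((\<lambda>p. norm (A p - A0)) \<longlongrightarrow> 0) F"
    using tendsto_norm_zero[OF LIM_zero[OF A]] .
  have dAw: "((\<lambda>p. norm (A p (w p) - A0 w0)) \<longlongrightarrow> 0) F"
    using tendsto_norm_zero[OF LIM_zero[OF Aw]] .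
  let ?g = "\<lambda>p. 2 / c * (norm (A p (w p) - A0 w0) + norm (A p - A0) * norm w0)"
  have "(?g \<longlongrightarrow> 2 / c * (0 + 0 * norm w0)) F"
    by (intro tendsto_intros dA dAw)
  then have g: "(?g \<longlongrightarrow> 0) F"
    by simp
  have "\<forall>\<^sub>F p in F. norm (A p - A0) < c / 2"
    using order_tendstoD(2)[OF dA, of "c / 2"] c(1) by simp
  then have "\<forall>\<^sub>F p in F. norm (w p - w0) \<le> ?g p"
  proof eventually_elim
    case (elim p)
    let ?u = "w p - w0"
    have "A0 ?u = (A p (w p) - A0 w0) - (A p - A0) ?u - (A p - A0) w0"
      by (simp add: blinfun.diff_left blinfun.diff_right)
    then have "c * norm ?u \<le> norm ((A p (w p) - A0 w0) - (A p - A0) ?u - (A p - A0) w0)"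
      using c(2)[of ?u] by simp
    also have "\<dots> \<le> norm (A p (w p) - A0 w0) + norm (A p - A0) * norm ?u + norm (A p - A0) * norm w0"
      using norm_blinfun[of "A p - A0" ?u] norm_blinfun[of "A p - A0" w0]
        norm_triangle_ineq4[of "A p (w p) - A0 w0 - (A p - A0) ?u" "(A p - A0) w0"]
        norm_triangle_ineq4[of "A p (w p) - A0 w0" "(A p - A0) ?u"]
      by linarith
    finally have "c * norm ?u \<le> \<dots>" .
    moreover have "norm (A p - A0) * norm ?u \<le> c / 2 * norm ?u"
      using elim by (intro mult_right_mono) auto
    ultimately have "c / 2 * norm ?u \<le> norm (A p (w p) - A0 w0) + norm (A p - A0) * norm w0"
      by linarith
    then have "2 / c * (c / 2 * norm ?u) \<le> ?g p"
      using c(1) by (intro mult_left_mono) auto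
    then show ?case
      using c(1) by simp
  qed
  then show ?thesis
    by (rule LIM_zero_cancel[OF Lim_null_comparison[OF _ g]])
qed

(* D has block matrix [[L, 0], [*, L]]. *)
definition block_triangular :: "('a::zero \<Rightarrow> 'b::zero) \<Rightarrow> ('a \<times> 'a \<Rightarrow> 'b \<times> 'b) \<Rightarrow> bool" where
  "block_triangular L D \<longleftrightarrow> (\<forall>v. fst (D v) = L (fst v)) \<and> (\<forall>y. D (0, y) = (0, L y))"

lemma block_triangular_apply:
  assumes "block_triangular L D" "fst v = 0"
  shows "D v = (0, L (snd v))"
  using assms unfolding block_triangular_def by (metis prod.collapse)

lemma block_triangular_inj:
  assumes D: "block_triangular L D" "linear D" and L: "linear L" "inj L"
  shows "inj D"
  unfolding linear_injective_0[OF D(2)]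
proof (intro allI impI)
  fix v
  assume "D v = 0"
  then have "L (fst v) = 0"
    using D(1) by (metis block_triangular_def fst_zero)
  then have "fst v = 0"
    using L linear_injective_0 by blast
  with \<open>D v = 0\<close> have "L (snd v) = 0"
    using block_triangular_apply[OF D(1)] by (simp add: zero_prod_def)
  then have "snd v = 0"
    using L linear_injective_0 by blast
  with \<open>fst v = 0\<close> show "v = 0"
    by (simp add: prod_eq_iff)
qed

lemma totally_real_subspace_block_triangular:
  assumes L: "linear L" "inj L" and J: "linear Jp" "inj Jp"
    and tr: "totally_real_subspace Jp (range L)"
    and D: "block_triangular L D" and Jc: "block_triangular Jp Jc"
  shows "totally_real_subspace Jc (range D)"
proof -
  have diag: "u = 0 \<and> u' = 0" if "L u = Jp (L u')" for u u'
  proof -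
    have "L u \<in> range L \<inter> Jp ` range L"
      using that by (metis IntI image_eqI rangeI)
    then have "L u = 0" "Jp (L u') = 0"
      using tr that unfolding totally_real_subspace_def by auto
    then show ?thesis
      using L J linear_injective_0 by (metis linear_0)
  qed
  have "p = 0" if "p = D v" "p = Jc (D v')" for p v v'
  proof -
    have "L (fst v) = Jp (L (fst v'))"
      using that D Jc unfolding block_triangular_def by metis
    then have "fst v = 0" "fst v' = 0"
      using diag by blast+
    then have Dv: "D v = (0, L (snd v))" and "D v' = (0, L (snd v'))"
      using block_triangular_apply[OF D] by blast+
    then have "Jc (D v') = (0, Jp (L (snd v')))"
      using block_triangular_apply[OF Jc, of "D v'"] by simp
    then have "L (snd v) = Jp (L (snd v'))"
      using that Dv by simp
    then have "snd v = 0"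
      using diag by blast
    then show "p = 0"
      using Dv that L(1) by (simp add: linear_0 zero_prod_def)
  qed
  moreover have "D 0 = 0" "Jc 0 = 0"
    using D Jc L(1) J(1) unfolding block_triangular_def by (simp_all add: zero_prod_def linear_0)
  ultimately show ?thesis
    unfolding totally_real_subspace_def by (auto intro: image_eqI[of 0 Jc 0])
qed

lemma block_triangular_complete_lift:
  "block_triangular (blinfun_apply (J x)) (complete_lift J (x, t))"
  by (auto simp: block_triangular_def complete_lift_def split: prod.split)

lemma tangent_lift_param_eq_sum:
  assumes "smooth_on \<phi> W" "x \<in> W"
  shows "tangent_lift_param \<phi> (x, w) = (\<phi> x, \<Sum>i\<in>Basis. (w \<bullet> i) *\<^sub>R iter_dd [i] \<phi> x)"
proof -
  let ?L = "frechet_derivative \<phi> (at x)"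
  have "?L w = (\<Sum>i\<in>Basis. (w \<bullet> i) *\<^sub>R ?L i)"
    using has_derivative_linear[OF smooth_on_has_frechet_derivative[OF assms]]
    by (rule linear_eq_sum_Basis)
  then show ?thesis
    by (simp add: tangent_lift_param_def smooth_on_frechet_derivative[OF assms])
qed

lemma smooth_on_tangent_lift_param:
  fixes \<phi> :: "'k::euclidean_space \<Rightarrow> 'm::euclidean_space"
  assumes \<phi>: "smooth_on \<phi> W"
  shows "smooth_on (tangent_lift_param \<phi>) (W \<times> UNIV)"
  unfolding smooth_on_iff_smooth_upto
proof
  fix n
  have \<phi>_n: "smooth_upto (Suc n) \<phi> W"
    using \<phi> smooth_on_iff_smooth_upto by blast
  have on_fst: "smooth_upto n (\<lambda>z::'k \<times> 'k. f (fst z)) (W \<times> UNIV)"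
    if "smooth_upto n f W" for f :: "'k \<Rightarrow> 'm"
    using smooth_upto_compose_linear[OF that bounded_linear_fst] by (simp add: vimage_fst)
  have WU: "open (W \<times> (UNIV :: 'k set))"
    using smooth_upto_open[OF \<phi>_n] by (simp add: open_Times)
  have "smooth_upto n (\<lambda>z::'k \<times> 'k. (snd z \<bullet> i) *\<^sub>R iter_dd [i] \<phi> (fst z)) (W \<times> UNIV)" for i :: 'k
    by (rule bounded_bilinear.smooth_upto[OF bounded_bilinear_scaleR
          smooth_upto_linear[OF WU bounded_linear_inner_left_comp[OF bounded_linear_snd]]
          on_fst[OF smooth_upto_SucD[OF \<phi>_n]]])
  then have "smooth_upto n (\<lambda>z. (\<phi> (fst z), \<Sum>i\<in>Basis. (snd z \<bullet> i) *\<^sub>R iter_dd [i] \<phi> (fst z))) (W \<times> UNIV)"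
    by (intro smooth_upto_Pair on_fst[OF smooth_upto_Suc_imp[OF \<phi>_n]] smooth_upto_sum[OF finite_Basis WU])
  then show "smooth_upto n (tangent_lift_param \<phi>) (W \<times> UNIV)"
    by (rule smooth_upto_cong) (auto simp: tangent_lift_param_eq_sum[OF \<phi>])
qed

lemma block_triangular_frechet_derivative_tangent_lift_param:
  fixes \<phi> :: "'k::euclidean_space \<Rightarrow> 'm::euclidean_space"
  assumes \<phi>: "smooth_on \<phi> W" and z: "z \<in> W \<times> UNIV"
  shows "block_triangular (frechet_derivative \<phi> (at (fst z)))
           (frechet_derivative (tangent_lift_param \<phi>) (at z))"
proof -
  obtain x w where zxw: "z = (x, w)" and x: "x \<in> W"
    using z by auto
  let ?T = "tangent_lift_param \<phi>"
  let ?D = "frechet_derivative ?T (at z)"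
  let ?L = "frechet_derivative \<phi> (at x)"
  have T: "(?T has_derivative ?D) (at z)"
    by (rule smooth_on_has_frechet_derivative[OF smooth_on_tangent_lift_param[OF \<phi>] z])
  have L: "(\<phi> has_derivative ?L) (at x)"
    by (rule smooth_on_has_frechet_derivative[OF \<phi> x])
  have "(\<phi> has_derivative ?L) (at (fst z))"
    using L zxw by simp
  from has_derivative_compose[OF has_derivative_fst[OF has_derivative_ident] this]
  have "((\<lambda>z. fst (?T z)) has_derivative (\<lambda>v. ?L (fst v))) (at z)"
    by (simp add: tangent_lift_param_def case_prod_beta)
  then have horizontal: "(\<lambda>v. fst (?D v)) = (\<lambda>v. ?L (fst v))"
    by (rule has_derivative_unique[OF has_derivative_fst[OF T]])
  have "((\<lambda>y. ?T (x, y)) has_derivative (\<lambda>y. ?D (0, y))) (at w)"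
    using has_derivative_compose[OF has_derivative_Pair[OF has_derivative_const has_derivative_ident]] T zxw
    by simp
  moreover have "((\<lambda>y. ?T (x, y)) has_derivative (\<lambda>y. (0, ?L y))) (at w)"
    using has_derivative_Pair[OF has_derivative_const bounded_linear.has_derivative[OF
          has_derivative_bounded_linear[OF L] has_derivative_ident]]
    by (simp add: tangent_lift_param_def)
  ultimately have vertical: "(\<lambda>y. ?D (0, y)) = (\<lambda>y. (0, ?L y))"
    by (rule has_derivative_unique)
  show ?thesis
    using horizontal vertical zxw unfolding block_triangular_def fun_eq_iff by simp
qed

lemma continuous_on_inv_into_fibrewise_linear:
  fixes \<Phi> :: "'a::topological_space \<Rightarrow> 'k::real_normed_vector \<Rightarrow>\<^sub>L 'm::euclidean_space"
    and \<phi> :: "'a \<Rightarrow> 'b::topological_space"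
  assumes \<phi>: "inj_on \<phi> W" "continuous_on (\<phi> ` W) (inv_into W \<phi>)"
    and \<Phi>: "continuous_on W \<Phi>" "\<And>x. x \<in> W \<Longrightarrow> inj (blinfun_apply (\<Phi> x))"
    and T: "\<And>x w. x \<in> W \<Longrightarrow> T (x, w) = (\<phi> x, \<Phi> x w)"
  shows "continuous_on (T ` (W \<times> UNIV)) (inv_into (W \<times> UNIV) T)"
  unfolding continuous_on_def
proof
  let ?G = "inv_into (W \<times> UNIV) T"
  let ?Im = "T ` (W \<times> UNIV)"
  have "inj_on T (W \<times> UNIV)"
    using \<phi>(1) \<Phi>(2) T by (auto simp: inj_on_def inj_def)
  then have G: "?G (\<phi> x, \<Phi> x w) = (x, w)" if "x \<in> W" for x w
    using that T by (intro inv_into_f_eq) auto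
  have fst_G: "fst (?G p) = inv_into W \<phi> (fst p)" and G_mem: "fst (?G p) \<in> W"
    and snd_G: "\<Phi> (fst (?G p)) (snd (?G p)) = snd p" if "p \<in> ?Im" for p
    using that \<phi>(1) G T by (auto simp: inv_into_f_f)
  fix p0
  assume p0: "p0 \<in> ?Im"
  have ev: "\<forall>\<^sub>F p in at p0 within ?Im. p \<in> ?Im"
    by (simp add: eventually_at_filter)
  have "continuous_on ?Im (\<lambda>p. inv_into W \<phi> (fst p))"
    using \<phi>(2) by (rule continuous_on_compose2) (auto intro: continuous_intros simp: T)
  then have "((\<lambda>p. inv_into W \<phi> (fst p)) \<longlongrightarrow> fst (?G p0)) (at p0 within ?Im)"
    using p0 fst_G unfolding continuous_on_def by auto
  moreover have "\<forall>\<^sub>F p in at p0 within ?Im. inv_into W \<phi> (fst p) = fst (?G p)"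
    using ev by eventually_elim (simp add: fst_G)
  ultimately have fst_lim: "((\<lambda>p. fst (?G p)) \<longlongrightarrow> fst (?G p0)) (at p0 within ?Im)"
    by (rule Lim_transform_eventually)
  have "\<forall>\<^sub>F p in at p0 within ?Im. fst (?G p) \<in> W"
    using ev by eventually_elim (rule G_mem)
  then have \<Phi>_lim: "((\<lambda>p. \<Phi> (fst (?G p))) \<longlongrightarrow> \<Phi> (fst (?G p0))) (at p0 within ?Im)"
    by (rule continuous_on_tendsto_compose[OF \<Phi>(1) fst_lim G_mem[OF p0]])
  have "\<forall>\<^sub>F p in at p0 within ?Im. snd p = \<Phi> (fst (?G p)) (snd (?G p))"
    using ev by eventually_elim (simp add: snd_G)
  with tendsto_snd[OF tendsto_ident_at]
  have "((\<lambda>p. \<Phi> (fst (?G p)) (snd (?G p))) \<longlongrightarrow> \<Phi> (fst (?G p0)) (snd (?G p0))) (at p0 within ?Im)"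
    unfolding snd_G[OF p0] by (rule Lim_transform_eventually)
  with \<Phi>_lim \<Phi>(2)[OF G_mem[OF p0]]
  have "((\<lambda>p. snd (?G p)) \<longlongrightarrow> snd (?G p0)) (at p0 within ?Im)"
    by (rule tendsto_blinfun_apply_cancel)
  from tendsto_Pair[OF fst_lim this] show "(?G \<longlongrightarrow> ?G p0) (at p0 within ?Im)"
    by simp
qed

lemma continuous_on_frechet_derivative_blinfun:
  assumes \<phi>: "smooth_on \<phi> W"
  shows "continuous_on W (\<lambda>x. Blinfun (frechet_derivative \<phi> (at x)))"
proof (rule continuous_on_blinfun_componentwise)
  fix i
  have "continuous_on W (iter_dd [i] \<phi>)"
    using \<phi> smooth_on_iff_smooth_upto smooth_upto_SucD smooth_upto_continuous_on by blast
  moreover have "Blinfun (frechet_derivative \<phi> (at x)) i = iter_dd [i] \<phi> x" if "x \<in> W" for x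
    using has_derivative_bounded_linear[OF smooth_on_has_frechet_derivative[OF \<phi> that]]
    by (simp add: bounded_linear_Blinfun_apply smooth_on_frechet_derivative[OF \<phi> that])
  ultimately show "continuous_on W (\<lambda>x. Blinfun (frechet_derivative \<phi> (at x)) i)"
    using continuous_on_eq by force
qed

lemma embedded_param_tangent_lift_param:
  fixes \<phi> :: "'k::euclidean_space \<Rightarrow> 'm::euclidean_space"
  assumes "embedded_param \<phi> W U"
  shows "embedded_param (tangent_lift_param \<phi>) (W \<times> UNIV) (U \<times> UNIV)"
proof -
  let ?T = "tangent_lift_param \<phi>"
  have \<phi>: "smooth_on \<phi> W" "inj_on \<phi> W" "continuous_on (\<phi> ` W) (inv_into W \<phi>)" "\<phi> ` W \<subseteq> U"
    and inj_D\<phi>: "\<And>x. x \<in> W \<Longrightarrow> inj (frechet_derivative \<phi> (at x))"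
    using assms unfolding embedded_param_def by blast+
  have D\<phi>: "blinfun_apply (Blinfun (frechet_derivative \<phi> (at x))) = frechet_derivative \<phi> (at x)"
    if "x \<in> W" for x
    using smooth_on_has_frechet_derivative[OF \<phi>(1) that]
    by (intro bounded_linear_Blinfun_apply has_derivative_bounded_linear)
  have "continuous_on (?T ` (W \<times> UNIV)) (inv_into (W \<times> UNIV) ?T)"
    by (intro continuous_on_inv_into_fibrewise_linear[OF \<phi>(2,3) continuous_on_frechet_derivative_blinfun[OF \<phi>(1)]])
      (simp_all add: D\<phi> inj_D\<phi> tangent_lift_param_def)
  moreover have "inj (frechet_derivative ?T (at z))" if z: "z \<in> W \<times> UNIV" for z
  proof -
    have x: "fst z \<in> W"
      using z by auto
    show ?thesis
      by (rule block_triangular_inj[OF block_triangular_frechet_derivative_tangent_lift_param[OF \<phi>(1) z]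
            has_derivative_linear[OF smooth_on_has_frechet_derivative[OF smooth_on_tangent_lift_param[OF \<phi>(1)] z]]
            has_derivative_linear[OF smooth_on_has_frechet_derivative[OF \<phi>(1) x]] inj_D\<phi>[OF x]])
  qed
  moreover have "inj_on ?T (W \<times> UNIV)"
    using \<phi>(2) inj_D\<phi> by (auto simp: inj_on_def inj_def tangent_lift_param_def)
  ultimately show ?thesis
    using smooth_on_tangent_lift_param[OF \<phi>(1)] \<phi>(4)
    by (auto simp: embedded_param_def tangent_lift_param_def)
qed

lemma almost_complex_on_inj:
  assumes "almost_complex_on J U" "p \<in> U"
  shows "inj (blinfun_apply (J p))"
proof (rule injI)
  fix a b
  assume "J p a = J p b"
  then have "J p (J p a) = J p (J p b)"
    by simp
  then show "a = b"
    using assms unfolding almost_complex_on_def by simp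
qed

lemma totally_real_subspace_tangent_lift_param:
  fixes \<phi> :: "'k::euclidean_space \<Rightarrow> 'm::euclidean_space"
  assumes J: "almost_complex_on J U" and \<phi>: "embedded_param \<phi> W U" and x: "x \<in> W"
    and tr: "totally_real_subspace (blinfun_apply (J (\<phi> x))) (tangent_space \<phi> x)"
  shows "totally_real_subspace (complete_lift J (tangent_lift_param \<phi> (x, w)))
           (tangent_space (tangent_lift_param \<phi>) (x, w))"
  unfolding tangent_space_def
proof (rule totally_real_subspace_block_triangular)
  have "smooth_on \<phi> W" "\<phi> x \<in> U" "inj (frechet_derivative \<phi> (at x))"
    using \<phi> x unfolding embedded_param_def by auto
  then show "linear (frechet_derivative \<phi> (at x))" "inj (frechet_derivative \<phi> (at x))"
    "linear (blinfun_apply (J (\<phi> x)))" "inj (blinfun_apply (J (\<phi> x)))"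
    "block_triangular (frechet_derivative \<phi> (at x)) (frechet_derivative (tangent_lift_param \<phi>) (at (x, w)))"
    using x has_derivative_linear[OF smooth_on_has_frechet_derivative] almost_complex_on_inj[OF J]
      block_triangular_frechet_derivative_tangent_lift_param[of \<phi> W "(x, w)"]
    by (auto intro: bounded_linear.linear[OF blinfun.bounded_linear_right])
  show "totally_real_subspace (blinfun_apply (J (\<phi> x))) (range (frechet_derivative \<phi> (at x)))"
    using tr by (simp add: tangent_space_def)
  show "block_triangular (blinfun_apply (J (\<phi> x))) (complete_lift J (tangent_lift_param \<phi> (x, w)))"
    by (simp add: tangent_lift_param_def block_triangular_complete_lift)
qed

theorem lemma5p1p2:
  fixes J :: "'m::euclidean_space \<Rightarrow> ('m \<Rightarrow>\<^sub>L 'm)"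
    and U :: "'m set"
    and \<phi> :: "'k::euclidean_space \<Rightarrow> 'm"
    and W :: "'k set"
  assumes "almost_complex_on J U"
    and "embedded_param \<phi> W U"
    and "\<forall>x\<in>W. totally_real_subspace (blinfun_apply (J (\<phi> x))) (tangent_space \<phi> x)"
  shows "embedded_param (tangent_lift_param \<phi>) (W \<times> UNIV) (U \<times> UNIV) \<and>
         (\<forall>z\<in>W \<times> UNIV.
            totally_real_subspace (complete_lift J (tangent_lift_param \<phi> z))
              (tangent_space (tangent_lift_param \<phi>) z))"
  using embedded_param_tangent_lift_param[OF assms(2)]
    totally_real_subspace_tangent_lift_param[OF assms(1,2)] assms(3)
  by auto

end
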